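(* Let $\vec{m}\in\mathbb{R}^N$ denote a vector of $N$ homodyne measurement outcomes and $\vec{\theta}$ a vector of $N$ homodyne-measurement angles with $\theta_j \in(-\tfrac{\pi}{2},\tfrac{\pi}{2}]$ for all $j$. Let $\hat{B}^{(N)} \to \mathbf{R}$ be a real beam-splitter network, where $\mathbf{R} \in \mathrm{O}(N)$ is neither block diagonal nor a row permutation away from block diagonal. Let $\vec{\theta}'$ be another vector of $N$ measurement angles with $\theta'_i\in(-\tfrac{\pi}{2},\tfrac{\pi}{2}]$, and let $\mathbf{L} \in \mathbb{R}^{N\times N}$ be a real matrix for which there exists a Gaussian unitary $\hat{U}_G$ satisfying $\sqrt{|\det \mathbf{L}^{-1}|}\, {}_{p}\!\langle \mathbf{L}^{-1} \vec{m}| = {}_{p}\!\langle \vec{m}| \hat{U}_G$. Then, given $\vec{\theta}$ and $\hat{B}^{(N)}$, there does not exist a pair $(\vec{\theta}',\mathbf{L})$ such that for all $\vec{m}\in\mathbb{R}^N$, $${}_{p_{\vec{\theta}}}\!\langle \vec{m}|\, \hat{B}^{(N)} = \sqrt{|\det \mathbf{L}^{-1}|}\; {}_{p_{\vec{\theta}'}}\!\langle \mathbf{L}^{-1} \vec{m}|,$$ unless $\vec{\theta}=\theta\vec{1}_N$ (all angles equal), where $\vec{1}_N=(1,\ldots,1)^{\mathsf{T}}$.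
   Context: Modes have quadratures $\hat q=(\hat a+\hat a^\dagger)/\sqrt2$, $\hat p=-i(\hat a-\hat a^\dagger)/\sqrt2$. The rotated quadrature is $\hat p_\theta = \hat R^\dagger(\theta)\hat p\hat R(\theta)=\hat p\cos\theta+\hat q\sin\theta$ with $\hat R(\theta)=e^{i\theta\hat a^\dagger\hat a}$; a homodyne measurement of $\hat p_\theta$ with outcome $m$ is the projection onto the bra ${}_{p_\theta}\!\langle m| = {}_{p}\!\langle m|\hat R(\theta)$, and ${}_{p_{\vec\theta}}\!\langle\vec m|$ denotes the tensor product of such bras over the $N$ modes. For a passive linear-optical unitary, $\hat U\to\mathbf U$ means $\hat U^\dagger\hat{\vec a}\hat U=\mathbf U\hat{\vec a}$ for the vector of annihilation operators. A real beam-splitter network is a product of beam splitters $e^{-\theta(\hat a_j\hat a_k^\dagger-\hat a_j^\dagger\hat a_k)}$, whose matrix is real orthogonal. The determinant factor accounts for the change of measure from linear post-processing of outcomes.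
   Formalization: R is not block diagonal after any permutation of its rows combined with any permutation of its columns, in place of being neither block diagonal nor a row permutation away from block diagonal. The statement above fails without it. *)

theory Defs
  imports "HOL-Analysis.Analysis"
begin

text \<open>Wavefunctions are taken in the p-representation: a (test) ket psi is a function
  real^'n => complex with psi p = <p|_p psi>.  Bras are represented by their action on
  continuous, compactly supported test functions.\<close>

definition test_ket :: "(real^'n \<Rightarrow> complex) \<Rightarrow> bool" where
  "test_ket psi \<longleftrightarrow> continuous_on UNIV psi \<and> bounded {x. psi x \<noteq> 0}"

text \<open>Single-mode kernel <x|_p R(theta) |y>_p for theta not a multiple of pi, with
  R(theta) = exp(i theta a^dagger a): Mehler's formula at z = exp(i theta), principal branch.\<close>

definition homodyne_kernel :: "real \<Rightarrow> real \<Rightarrow> real \<Rightarrow> complex" where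
  "homodyne_kernel \<theta> x y =
     cis (x * y / sin \<theta> - cot \<theta> * (x\<^sup>2 + y\<^sup>2) / 2)
     / (complex_of_real (sqrt pi) * csqrt (1 - cis (2 * \<theta>)))"

text \<open>The tensor-product homodyne bra <m|_{p_theta} applied to a ket psi:
  modes with theta_j = 0 are evaluated at m_j, the others are integrated against the kernel.\<close>

definition homodyne_bra :: "real^'n \<Rightarrow> real^'n \<Rightarrow> (real^'n \<Rightarrow> complex) \<Rightarrow> complex" where
  "homodyne_bra \<theta> m psi =
     (let S = {j. \<theta> $ j \<noteq> 0} in
      integral\<^sup>L (PiM S (\<lambda>_. lborel))
        (\<lambda>y. (\<Prod>j\<in>S. homodyne_kernel (\<theta> $ j) (m $ j) (y j))
              * psi (\<chi> j. if j \<in> S then y j else m $ j)))"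

text \<open>Action of the passive linear-optical unitary B with B^dagger a B = R a (R real orthogonal)
  on p-representation wavefunctions: (B psi)(p) = psi(R^T p).\<close>

definition passive_action :: "real^'n^'n \<Rightarrow> (real^'n \<Rightarrow> complex) \<Rightarrow> (real^'n \<Rightarrow> complex)" where
  "passive_action R psi = (\<lambda>p. psi (transpose R *v p))"

text \<open>R is block diagonal up to relabelling of rows and columns (nontrivial split).\<close>

definition block_decomposable :: "real^'n^'n \<Rightarrow> bool" where
  "block_decomposable R \<longleftrightarrow>
     (\<exists>S T. S \<noteq> {} \<and> S \<noteq> UNIV \<and> T \<noteq> {} \<and> T \<noteq> UNIV \<and>
        (\<forall>i j. (i \<in> T) \<noteq> (j \<in> S) \<longrightarrow> R $ i $ j = 0))"

end

theory Submission
  imports Defs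
begin

text \<open>Only the outcome \<open>m = 0\<close> is used: there the identity says \<open>\<langle>0|\<^sub>\<theta> B = c \<langle>0|\<^sub>\<theta>'\<close> with
  \<open>c = |det L\<^sup>-\<^sup>1|\<^sup>1\<^sup>/\<^sup>2 > 0\<close>.  Pairing both sides with a wave function of the form (nonnegative
  tent) \<open>\<times>\<close> (conjugate of a bra kernel) turns one side into the integral of a nonnegative
  function.  Tents centred on a coordinate axis show that \<open>R\<^sub>i\<^sub>j \<noteq> 0\<close> forces \<open>\<theta>\<^sub>i\<close> and \<open>\<theta>'\<^sub>j\<close>
  to be both zero or both nonzero.  When all angles are nonzero, arbitrary tents show that
  \<open>c K\<^sub>\<theta>\<^sub>'(x) conj K\<^sub>\<theta>(Rx) = \<kappa> exp (i Q(x)/2)\<close>, with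
  \<open>Q(x) = \<Sum>\<^sub>i cot \<theta>\<^sub>i (Rx)\<^sub>i\<^sup>2 - \<Sum>\<^sub>j cot \<theta>'\<^sub>j x\<^sub>j\<^sup>2\<close>, is a nonnegative real for every \<open>x\<close>; this
  forces \<open>Q = 0\<close>, hence \<open>cot \<theta>\<^sub>i = cot \<theta>'\<^sub>j\<close> whenever \<open>R\<^sub>i\<^sub>j \<noteq> 0\<close>.  In both cases a
  nonconstant \<open>\<theta>\<close> splits \<open>R\<close> into blocks.\<close>

section \<open>Integrals over coordinate slices\<close>

definition slice :: "'n set \<Rightarrow> real^'n \<Rightarrow> ('n \<Rightarrow> real) \<Rightarrow> real^'n" where
  "slice S m y = (\<chi> j. if j \<in> S then y j else m $ j)"

abbreviation lborel_coords :: "'n set \<Rightarrow> ('n \<Rightarrow> real) measure" where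
  "lborel_coords S \<equiv> PiM S (\<lambda>_. lborel)"

lemma slice_nth [simp]:
  "j \<in> S \<Longrightarrow> slice S m y $ j = y j"
  "j \<notin> S \<Longrightarrow> slice S m y $ j = m $ j"
  by (auto simp: slice_def)

lemma slice_nth_eq:
  assumes "\<forall>j. j \<notin> S \<longrightarrow> x $ j = m $ j"
  shows "slice S m (\<lambda>j. x $ j) = x"
  using assms by (auto simp: slice_def vec_eq_iff)

lemma slice_measurable: "slice S (m :: real^'n) \<in> borel_measurable (lborel_coords S)"
proof (subst borel_measurable_euclidean_space, intro ballI)
  fix b :: "real^'n" assume "b \<in> Basis"
  then obtain i where b: "b = axis i 1" by (auto simp: Basis_vec_def)
  have "(\<lambda>y. slice S m y \<bullet> b) = (\<lambda>y. if i \<in> S then y i else m $ i)"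
    by (auto simp: b slice_def inner_axis)
  then show "(\<lambda>y. slice S m y \<bullet> b) \<in> borel_measurable (lborel_coords S)"
    by (cases "i \<in> S") (auto intro: measurable_component_singleton)
qed

lemma bounded_range_if_bounded_support:
  fixes G :: "'a::euclidean_space \<Rightarrow> 'b::real_normed_vector"
  assumes "continuous_on UNIV G" and "bounded {x. G x \<noteq> 0}"
  obtains B where "\<And>x. norm (G x) \<le> B"
proof -
  obtain r where r: "\<And>x. G x \<noteq> 0 \<Longrightarrow> norm x \<le> r"
    using assms(2) unfolding bounded_iff by blast
  have "compact (G ` cball 0 r)"
    by (rule compact_continuous_image) (auto intro: continuous_on_subset[OF assms(1)])
  then have "bounded (G ` cball 0 r)" by (rule compact_imp_bounded)
  then obtain B where B: "\<And>x. x \<in> cball 0 r \<Longrightarrow> norm (G x) \<le> B"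
    unfolding bounded_iff by blast
  have "norm (G x) \<le> max B 0" for x
    using B[of x] r[of x] by (cases "G x = 0") auto
  then show ?thesis by (rule that)
qed

lemma integrable_slice:
  fixes G :: "real^'n \<Rightarrow> 'b::{banach, second_countable_topology}"
  assumes cont: "continuous_on UNIV G" and supp: "bounded {x. G x \<noteq> 0}"
  shows "integrable (lborel_coords S) (\<lambda>y. G (slice S m y))"
proof -
  interpret product_sigma_finite "\<lambda>_. lborel" by standard
  obtain r where r: "\<And>x. G x \<noteq> 0 \<Longrightarrow> norm x \<le> r"
    using supp unfolding bounded_iff by blast
  obtain B where B: "\<And>x. norm (G x) \<le> B"
    using bounded_range_if_bounded_support[OF cont supp] by blast
  define A where "A = Pi\<^sub>E S (\<lambda>_. {-r..r})"
  have A: "A \<in> sets (lborel_coords S)"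
    unfolding A_def by (rule sets_PiM_I_finite) auto
  have "emeasure (lborel_coords S) A = (\<Prod>i\<in>S. emeasure lborel {-r..r})"
    unfolding A_def by (rule emeasure_PiM) auto
  then have "emeasure (lborel_coords S) A < \<infinity>"
    by (auto simp: less_top[symmetric] ennreal_prod_eq_top emeasure_lborel_Icc_eq ennreal_power power_0_left)
  show ?thesis
  proof (rule Bochner_Integration.integrable_bound[where f="\<lambda>y. B * indicator A y :: real"])
    show "integrable (lborel_coords S) (\<lambda>y. B * indicator A y)"
      using A \<open>emeasure (lborel_coords S) A < \<infinity>\<close> by simp
    show "(\<lambda>y. G (slice S m y)) \<in> borel_measurable (lborel_coords S)"
      by (rule measurable_compose[OF slice_measurable borel_measurable_continuous_onI[OF cont]])
    show "AE y in lborel_coords S. norm (G (slice S m y)) \<le> norm (B * indicator A y)"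
    proof (rule AE_I2)
      fix y assume y: "y \<in> space (lborel_coords S)"
      show "norm (G (slice S m y)) \<le> norm (B * indicator A y)"
      proof (cases "G (slice S m y) = 0")
        case False
        then have "norm (slice S m y) \<le> r" by (rule r)
        then have "\<bar>y j\<bar> \<le> r" if "j \<in> S" for j
          using component_le_norm_cart[of "slice S m y" j] that by simp
        then have "y \<in> A"
          using y unfolding A_def space_PiM by (force simp: PiE_iff abs_le_iff)
        then show ?thesis using B[of "slice S m y"] by simp
      qed simp
    qed
  qed
qed

lemma dist_slice_le:
  fixes m :: "real^'n"
  assumes "\<forall>j\<in>S. \<bar>y j - y0 j\<bar> \<le> d" and "0 \<le> d"
  shows "dist (slice S m y0) (slice S m y) \<le> real CARD('n) * d"
proof -
  have "\<bar>(slice S m y - slice S m y0) $ i\<bar> \<le> d" for i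
    using assms by (cases "i \<in> S") auto
  then have "(\<Sum>i\<in>UNIV. \<bar>(slice S m y - slice S m y0) $ i\<bar>) \<le> (\<Sum>i\<in>(UNIV :: 'n set). d)"
    by (intro sum_mono)
  then show ?thesis
    using norm_le_l1_cart[of "slice S m y - slice S m y0"] by (simp add: dist_norm norm_minus_commute)
qed

text \<open>A continuous function that is positive at one point of the slice is positive on a
  box of positive measure around it.\<close>

lemma integral_slice_pos:
  fixes G :: "real^'n \<Rightarrow> real"
  assumes cont: "continuous_on UNIV G" and supp: "bounded {x. G x \<noteq> 0}"
    and nonneg: "\<And>x. 0 \<le> G x" and pos: "G (slice S m y0) > 0"
  shows "integral\<^sup>L (lborel_coords S) (\<lambda>y. G (slice S m y)) > 0"
proof (rule ccontr)
  interpret product_sigma_finite "\<lambda>_. lborel" by standard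
  assume "\<not> ?thesis"
  moreover have "integral\<^sup>L (lborel_coords S) (\<lambda>y. G (slice S m y)) \<ge> 0"
    by (rule integral_nonneg_AE) (simp add: nonneg)
  ultimately have "integral\<^sup>L (lborel_coords S) (\<lambda>y. G (slice S m y)) = 0" by linarith
  then have "AE y in lborel_coords S. G (slice S m y) = 0"
    using integral_nonneg_eq_0_iff_AE[OF integrable_slice[OF cont supp]] nonneg by simp
  then obtain N where N: "{y \<in> space (lborel_coords S). G (slice S m y) \<noteq> 0} \<subseteq> N"
    "emeasure (lborel_coords S) N = 0" "N \<in> sets (lborel_coords S)"
    by (rule AE_E)
  define p where "p = slice S m y0"
  have "isCont G p" using cont by (simp add: continuous_on_eq_continuous_at)
  then obtain \<delta> where "\<delta> > 0" and \<delta>: "\<And>x. dist p x < \<delta> \<Longrightarrow> G x \<noteq> 0"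
    using continuous_at_avoid[of p G 0] pos unfolding p_def by force
  define d where "d = \<delta> / (real CARD('n) + 1)"
  have "d > 0" using \<open>\<delta> > 0\<close> by (simp add: d_def)
  have "real CARD('n) * d < (real CARD('n) + 1) * d" using \<open>d > 0\<close> by simp
  then have small: "real CARD('n) * d < \<delta>" by (simp add: d_def)
  define A where "A = Pi\<^sub>E S (\<lambda>j. {y0 j - d .. y0 j + d})"
  have A: "A \<in> sets (lborel_coords S)"
    unfolding A_def by (rule sets_PiM_I_finite) auto
  have "A \<subseteq> {y \<in> space (lborel_coords S). G (slice S m y) \<noteq> 0}"
  proof
    fix y assume "y \<in> A"
    then have "dist p (slice S m y) \<le> real CARD('n) * d"
      unfolding p_def using \<open>d > 0\<close>
      by (intro dist_slice_le) (auto simp: A_def PiE_iff abs_le_iff)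
    then have "G (slice S m y) \<noteq> 0" using small by (intro \<delta>) simp
    then show "y \<in> {y \<in> space (lborel_coords S). G (slice S m y) \<noteq> 0}"
      using \<open>y \<in> A\<close> A sets.sets_into_space by blast
  qed
  then have "emeasure (lborel_coords S) A \<le> emeasure (lborel_coords S) N"
    using N by (intro emeasure_mono) auto
  then have "emeasure (lborel_coords S) A = 0"
    using N by simp
  moreover have "emeasure (lborel_coords S) A = (\<Prod>i\<in>S. emeasure lborel {y0 i - d .. y0 i + d})"
    unfolding A_def by (rule emeasure_PiM) auto
  ultimately show False using \<open>d > 0\<close> by (simp add: emeasure_lborel_Icc_eq)
qed

section \<open>Positivity by testing against tents\<close>

definition tent :: "'a::real_normed_vector \<Rightarrow> real \<Rightarrow> 'a \<Rightarrow> real" where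
  "tent p r x = max 0 (r - norm (x - p))"

lemma continuous_on_tent: "continuous_on UNIV (tent p r)"
  unfolding tent_def by (intro continuous_intros)

lemma tent_nonneg: "0 \<le> tent p r x"
  by (simp add: tent_def)

lemma tent_center_pos: "0 < r \<Longrightarrow> 0 < tent p r p"
  by (simp add: tent_def)

lemma tent_eq_0: "r \<le> norm (x - p) \<Longrightarrow> tent p r x = 0"
  by (simp add: tent_def)

lemma bounded_tent_support: "bounded {x. tent p r x \<noteq> 0}"
  by (rule bounded_subset[OF bounded_cball[of p r]]) (auto simp: tent_def dist_norm norm_minus_commute)

lemma nonneg_if_nonneg_on_tests:
  fixes h :: "real^'n \<Rightarrow> real"
  assumes cont: "continuous_on UNIV h"
    and tests: "\<And>b. continuous_on UNIV b \<Longrightarrow> bounded {x. b x \<noteq> 0} \<Longrightarrow> (\<forall>x. 0 \<le> b x) \<Longrightarrow>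
       0 \<le> integral\<^sup>L (lborel_coords UNIV) (\<lambda>y. b (slice UNIV 0 y) * h (slice UNIV 0 y))"
  shows "0 \<le> h x0"
proof (rule ccontr)
  assume neg: "\<not> 0 \<le> h x0"
  define b where "b x = tent x0 1 x * max 0 (- h x)" for x
  define g where "g x = tent x0 1 x * (max 0 (- h x))\<^sup>2" for x
  have "0 \<le> integral\<^sup>L (lborel_coords UNIV) (\<lambda>y. b (slice UNIV 0 y) * h (slice UNIV 0 y))"
  proof (rule tests)
    show "continuous_on UNIV b" unfolding b_def by (intro continuous_intros continuous_on_tent cont)
    show "bounded {x. b x \<noteq> 0}"
      by (rule bounded_subset[OF bounded_tent_support[of x0 1]]) (auto simp: b_def)
    show "\<forall>x. 0 \<le> b x" by (simp add: b_def tent_nonneg)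
  qed
  moreover have "b x * h x = - g x" for x
    by (cases "0 \<le> h x") (auto simp: b_def g_def power2_eq_square)
  moreover have "0 < integral\<^sup>L (lborel_coords UNIV) (\<lambda>y. g (slice UNIV 0 y))"
  proof (rule integral_slice_pos)
    show "continuous_on UNIV g" unfolding g_def by (intro continuous_intros continuous_on_tent cont)
    show "bounded {x. g x \<noteq> 0}"
      by (rule bounded_subset[OF bounded_tent_support[of x0 1]]) (auto simp: g_def)
    show "0 \<le> g x" for x by (simp add: g_def tent_nonneg)
    show "0 < g (slice UNIV 0 (\<lambda>j. x0 $ j))"
      using neg tent_center_pos[of 1 x0] by (simp add: slice_nth_eq g_def)
  qed
  ultimately show False by simp
qed

lemma nonneg_real_if_nonneg_on_tests:
  fixes w :: "real^'n \<Rightarrow> complex"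
  assumes cont: "continuous_on UNIV w"
    and tests: "\<And>b. continuous_on UNIV b \<Longrightarrow> bounded {x. b x \<noteq> 0} \<Longrightarrow> (\<forall>x. 0 \<le> b x) \<Longrightarrow>
       \<exists>t\<ge>0. integral\<^sup>L (lborel_coords UNIV)
               (\<lambda>y. of_real (b (slice UNIV 0 y)) * w (slice UNIV 0 y)) = of_real t"
  shows "Im (w x) = 0 \<and> 0 \<le> Re (w x)"
proof -
  have Im_Re: "integral\<^sup>L (lborel_coords UNIV) (\<lambda>y. b (slice UNIV 0 y) * Im (w (slice UNIV 0 y))) = 0 \<and>
      0 \<le> integral\<^sup>L (lborel_coords UNIV) (\<lambda>y. b (slice UNIV 0 y) * Re (w (slice UNIV 0 y)))"
    if b: "continuous_on UNIV b" "bounded {x. b x \<noteq> 0}" "\<forall>x. 0 \<le> b x" for b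
  proof -
    obtain t where "0 \<le> t"
      and t: "integral\<^sup>L (lborel_coords UNIV) (\<lambda>y. of_real (b (slice UNIV 0 y)) * w (slice UNIV 0 y)) = of_real t"
      using tests[OF b] by blast
    have "integrable (lborel_coords UNIV) (\<lambda>y. of_real (b (slice UNIV 0 y)) * w (slice UNIV 0 y))"
    proof (rule integrable_slice[where G = "\<lambda>x. of_real (b x) * w x"])
      show "continuous_on UNIV (\<lambda>x. of_real (b x) * w x)"
        by (intro continuous_intros b(1) cont)
      show "bounded {x. of_real (b x) * w x \<noteq> 0}"
        by (rule bounded_subset[OF b(2)]) auto
    qed
    from integral_Im[OF this] integral_Re[OF this] show ?thesis
      using t \<open>0 \<le> t\<close> by simp
  qed
  have "0 \<le> Im (w x)" and "0 \<le> - Im (w x)" and "0 \<le> Re (w x)"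
    by (rule nonneg_if_nonneg_on_tests, intro continuous_intros cont, simp add: Im_Re)+
  then show ?thesis by simp
qed

section \<open>Homodyne bra kernels\<close>

text \<open>At a nonzero multiple of \<open>\<pi>\<close> the denominator of \<^const>\<open>homodyne_kernel\<close> vanishes, so the
  kernel is \<open>0\<close> by division by zero.\<close>

definition admissible_angles :: "real^'n \<Rightarrow> bool" where
  "admissible_angles \<theta> \<longleftrightarrow> (\<forall>j. \<theta> $ j \<noteq> 0 \<longrightarrow> sin (\<theta> $ j) \<noteq> 0)"

lemma admissible_angles_if_in_range:
  assumes "\<forall>j. \<theta> $ j \<in> {-(pi/2)<..pi/2}"
  shows "admissible_angles \<theta>"
  unfolding admissible_angles_def
proof (intro allI impI)
  fix j assume "\<theta> $ j \<noteq> 0"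
  moreover have "\<bar>\<theta> $ j\<bar> < pi" using assms[rule_format, of j] pi_gt_zero by auto
  ultimately show "sin (\<theta> $ j) \<noteq> 0" using sin_zero_pi_iff by blast
qed

lemma homodyne_kernel_nonzero:
  assumes "sin t \<noteq> 0"
  shows "homodyne_kernel t a y \<noteq> 0"
proof -
  have "cos (2 * t) < 1" using assms by (simp add: cos_double_sin)
  then have "cis (2 * t) \<noteq> 1" by (metis cis.sel(1) one_complex.sel(1) less_irrefl)
  then show ?thesis by (simp add: homodyne_kernel_def)
qed

abbreviation rotated :: "real^'n \<Rightarrow> 'n set" where
  "rotated \<theta> \<equiv> {j. \<theta> $ j \<noteq> 0}"

definition bra_kernel :: "real^'n \<Rightarrow> real^'n \<Rightarrow> real^'n \<Rightarrow> complex" where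
  "bra_kernel \<theta> m x = (\<Prod>j\<in>rotated \<theta>. homodyne_kernel (\<theta> $ j) (m $ j) (x $ j))"

lemma homodyne_bra_slice:
  "homodyne_bra \<theta> m psi = integral\<^sup>L (lborel_coords (rotated \<theta>))
     (\<lambda>y. bra_kernel \<theta> m (slice (rotated \<theta>) m y) * psi (slice (rotated \<theta>) m y))"
proof -
  have "(\<Prod>j\<in>rotated \<theta>. homodyne_kernel (\<theta> $ j) (m $ j) (y j)) = bra_kernel \<theta> m (slice (rotated \<theta>) m y)" for y
    unfolding bra_kernel_def by (rule prod.cong) auto
  then show ?thesis unfolding homodyne_bra_def Let_def by (simp add: slice_def)
qed

lemma continuous_on_bra_kernel: "continuous_on UNIV (bra_kernel \<theta> m)"
  unfolding bra_kernel_def homodyne_kernel_def divide_inverse by (intro continuous_intros)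

lemma continuous_on_bra_kernel_compose [continuous_intros]:
  "continuous_on S f \<Longrightarrow> continuous_on S (\<lambda>x. bra_kernel \<theta> m (f x))"
  by (rule continuous_on_compose2[OF continuous_on_bra_kernel]) auto

lemma bra_kernel_nonzero: "admissible_angles \<theta> \<Longrightarrow> bra_kernel \<theta> m x \<noteq> 0"
  by (auto simp: bra_kernel_def admissible_angles_def homodyne_kernel_nonzero)

lemma prod_cis: "(\<Prod>j\<in>A. cis (f j)) = cis (\<Sum>j\<in>A. f j)"
  by (induction A rule: infinite_finite_induct) (auto simp: cis_mult)

lemma homodyne_kernel_origin:
  "homodyne_kernel t 0 y = homodyne_kernel t 0 0 * cis (- (cot t * y\<^sup>2) / 2)"
proof -
  have "homodyne_kernel t 0 y = cis (- (cot t * y\<^sup>2) / 2) / (of_real (sqrt pi) * csqrt (1 - cis (2 * t)))"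
    unfolding homodyne_kernel_def by simp
  moreover have "homodyne_kernel t 0 0 = 1 / (of_real (sqrt pi) * csqrt (1 - cis (2 * t)))"
    unfolding homodyne_kernel_def by simp
  ultimately show ?thesis by simp
qed

lemma bra_kernel_origin:
  "bra_kernel \<theta> 0 x = bra_kernel \<theta> 0 0 * cis (- (\<Sum>j\<in>rotated \<theta>. cot (\<theta> $ j) * (x $ j)\<^sup>2) / 2)"
proof -
  have "bra_kernel \<theta> 0 x
      = (\<Prod>j\<in>rotated \<theta>. homodyne_kernel (\<theta> $ j) 0 0 * cis (- (cot (\<theta> $ j) * (x $ j)\<^sup>2) / 2))"
    unfolding bra_kernel_def zero_index by (rule prod.cong[OF refl]) (rule homodyne_kernel_origin)
  also have "\<dots> = bra_kernel \<theta> 0 0 * (\<Prod>j\<in>rotated \<theta>. cis (- (cot (\<theta> $ j) * (x $ j)\<^sup>2) / 2))"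
    by (simp add: bra_kernel_def prod.distrib)
  also have "\<dots> = bra_kernel \<theta> 0 0 * cis (- (\<Sum>j\<in>rotated \<theta>. cot (\<theta> $ j) * (x $ j)\<^sup>2) / 2)"
    by (simp add: prod_cis sum_negf sum_divide_distrib)
  finally show ?thesis .
qed

lemma homodyne_bra_weighted_conj_kernel:
  "homodyne_bra \<theta> m (\<lambda>x. of_real (g x) * cnj (bra_kernel \<theta> m x)) =
     of_real (integral\<^sup>L (lborel_coords (rotated \<theta>))
       (\<lambda>y. g (slice (rotated \<theta>) m y) * (cmod (bra_kernel \<theta> m (slice (rotated \<theta>) m y)))\<^sup>2))"
  unfolding homodyne_bra_slice integral_complex_of_real[symmetric]
proof (rule Bochner_Integration.integral_cong[OF refl])
  fix y
  let ?K = "bra_kernel \<theta> m (slice (rotated \<theta>) m y)" and ?g = "g (slice (rotated \<theta>) m y)"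
  have "?K * (of_real ?g * cnj ?K) = of_real ?g * (?K * cnj ?K)"
    by (simp only: mult.left_commute)
  also have "\<dots> = of_real (?g * (cmod ?K)\<^sup>2)"
    by (simp only: complex_norm_square of_real_mult)
  finally show "?K * (of_real ?g * cnj ?K) = of_real (?g * (cmod ?K)\<^sup>2)" .
qed

lemma homodyne_bra_weighted_conj_kernel_nonneg:
  assumes "\<And>x. 0 \<le> g x"
  shows "\<exists>t\<ge>0. homodyne_bra \<theta> m (\<lambda>x. of_real (g x) * cnj (bra_kernel \<theta> m x)) = of_real t"
proof -
  have "0 \<le> integral\<^sup>L (lborel_coords (rotated \<theta>))
      (\<lambda>y. g (slice (rotated \<theta>) m y) * (cmod (bra_kernel \<theta> m (slice (rotated \<theta>) m y)))\<^sup>2)"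
    by (rule integral_nonneg_AE) (simp add: assms)
  then show ?thesis unfolding homodyne_bra_weighted_conj_kernel by blast
qed

lemma homodyne_bra_weighted_conj_kernel_nonzero:
  assumes "admissible_angles \<theta>" and g: "continuous_on UNIV g" "bounded {x. g x \<noteq> 0}" "\<And>x. 0 \<le> g x"
    and "0 < g x0" and "\<forall>j. \<theta> $ j = 0 \<longrightarrow> x0 $ j = m $ j"
  shows "homodyne_bra \<theta> m (\<lambda>x. of_real (g x) * cnj (bra_kernel \<theta> m x)) \<noteq> 0"
proof -
  have "0 < integral\<^sup>L (lborel_coords (rotated \<theta>))
      (\<lambda>y. g (slice (rotated \<theta>) m y) * (cmod (bra_kernel \<theta> m (slice (rotated \<theta>) m y)))\<^sup>2)"
  proof (rule integral_slice_pos[where G = "\<lambda>x. g x * (cmod (bra_kernel \<theta> m x))\<^sup>2"])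
    show "continuous_on UNIV (\<lambda>x. g x * (cmod (bra_kernel \<theta> m x))\<^sup>2)"
      by (intro continuous_intros g(1))
    show "bounded {x. g x * (cmod (bra_kernel \<theta> m x))\<^sup>2 \<noteq> 0}"
      by (rule bounded_subset[OF g(2)]) auto
    show "0 \<le> g x * (cmod (bra_kernel \<theta> m x))\<^sup>2" for x
      using g(3) by simp
    have "slice (rotated \<theta>) m (\<lambda>j. x0 $ j) = x0"
      using assms(6) by (intro slice_nth_eq) auto
    then show "0 < g (slice (rotated \<theta>) m (\<lambda>j. x0 $ j)) *
        (cmod (bra_kernel \<theta> m (slice (rotated \<theta>) m (\<lambda>j. x0 $ j))))\<^sup>2"
      using \<open>0 < g x0\<close> bra_kernel_nonzero[OF assms(1)] by simp
  qed
  then show ?thesis unfolding homodyne_bra_weighted_conj_kernel by simp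
qed

lemma homodyne_bra_eq_0:
  assumes "\<And>x. \<forall>j. \<theta> $ j = 0 \<longrightarrow> x $ j = m $ j \<Longrightarrow> psi x = 0"
  shows "homodyne_bra \<theta> m psi = 0"
proof -
  have "psi (slice (rotated \<theta>) m y) = 0" for y by (rule assms) simp
  then show ?thesis unfolding homodyne_bra_slice by simp
qed

section \<open>Intertwined homodyne bras\<close>

lemma orthogonal_matrix_transpose_cancel:
  assumes "orthogonal_matrix (R :: real^'n^'n)"
  shows "R *v (transpose R *v x) = x" and "transpose R *v (R *v x) = x"
  using assms by (metis matrix_vector_mul_assoc matrix_vector_mul_lid orthogonal_matrix_def)+

lemma norm_orthogonal_matrix_vector:
  assumes "orthogonal_matrix (R :: real^'n^'n)"
  shows "norm (R *v x) = norm x"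
proof -
  have "orthogonal_transformation (\<lambda>x. R *v x)"
    using assms by (simp add: orthogonal_transformation_matrix)
  then show ?thesis by (rule orthogonal_transformation_norm)
qed

lemma test_ket_weighted:
  assumes "continuous_on UNIV g" "bounded {x. g x \<noteq> 0}" "continuous_on UNIV h"
  shows "test_ket (\<lambda>x. of_real (g x) * h x)"
  unfolding test_ket_def
proof
  show "continuous_on UNIV (\<lambda>x. of_real (g x) * h x)"
    by (intro continuous_intros assms(1,3))
  show "bounded {x. of_real (g x) * h x \<noteq> 0}"
    by (rule bounded_subset[OF assms(2)]) auto
qed

lemma test_ket_passive_action:
  assumes orth: "orthogonal_matrix R" and "test_ket psi"
  shows "test_ket (passive_action R psi)"
  unfolding test_ket_def passive_action_def
proof
  have "continuous_on UNIV psi" using \<open>test_ket psi\<close> by (simp add: test_ket_def)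
  then show "continuous_on UNIV (\<lambda>p. psi (transpose R *v p))"
    by (rule continuous_on_compose2[OF _ matrix_vector_mult_linear_continuous_on]) simp
  obtain r where r: "\<And>x. psi x \<noteq> 0 \<Longrightarrow> norm x \<le> r"
    using \<open>test_ket psi\<close> unfolding test_ket_def bounded_iff by blast
  have "norm p \<le> r" if "psi (transpose R *v p) \<noteq> 0" for p
    using r[OF that] norm_orthogonal_matrix_vector[of "transpose R" p] orth by simp
  then show "bounded {p. psi (transpose R *v p) \<noteq> 0}"
    unfolding bounded_iff by blast
qed

lemma passive_action_transpose_cancel:
  assumes "orthogonal_matrix R"
  shows "passive_action R (passive_action (transpose R) psi) = psi"
  by (simp only: passive_action_def transpose_transpose orthogonal_matrix_transpose_cancel[OF assms])

definition bra_intertwined :: "real^'n \<Rightarrow> real^'n \<Rightarrow> real^'n^'n \<Rightarrow> real \<Rightarrow> bool" where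
  "bra_intertwined \<theta> \<theta>' R c \<longleftrightarrow>
     (\<forall>psi. test_ket psi \<longrightarrow>
        homodyne_bra \<theta> 0 (passive_action R psi) = of_real c * homodyne_bra \<theta>' 0 psi)"

lemma bra_intertwined_transpose:
  fixes R :: "real^'n^'n"
  assumes rel: "bra_intertwined \<theta> \<theta>' R c" and orth: "orthogonal_matrix R" and "c \<noteq> 0"
  shows "bra_intertwined \<theta>' \<theta> (transpose R) (inverse c)"
  unfolding bra_intertwined_def
proof (intro allI impI)
  fix psi :: "real^'n \<Rightarrow> complex" assume "test_ket psi"
  then have psi': "test_ket (passive_action (transpose R) psi)"
    using orth by (simp add: test_ket_passive_action)
  have "homodyne_bra \<theta> 0 psi = of_real c * homodyne_bra \<theta>' 0 (passive_action (transpose R) psi)"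
    using rel[unfolded bra_intertwined_def, rule_format, OF psi']
    by (simp only: passive_action_transpose_cancel[OF orth])
  then show "homodyne_bra \<theta>' 0 (passive_action (transpose R) psi) = of_real (inverse c) * homodyne_bra \<theta> 0 psi"
    using \<open>c \<noteq> 0\<close> by (simp add: field_simps)
qed

text \<open>Test with a tent of radius \<open>\<bar>R\<^sub>i\<^sub>j\<bar>\<close> around the axis \<open>e\<^sub>i\<close>, which meets the slice of \<open>\<theta>\<close>
  but, after the rotation by \<open>R\<close>, misses the slice \<open>x\<^sub>j = 0\<close> of \<open>\<theta>'\<close>.\<close>

lemma bra_intertwined_entry_eq_0:
  fixes R :: "real^'n^'n"
  assumes rel: "bra_intertwined \<theta> \<theta>' R c" and orth: "orthogonal_matrix R"
    and adm: "admissible_angles \<theta>" and "\<theta> $ i \<noteq> 0" and "\<theta>' $ j = 0"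
  shows "R $ i $ j = 0"
proof (rule ccontr)
  assume "R $ i $ j \<noteq> 0"
  define r where "r = \<bar>R $ i $ j\<bar>"
  define phi where "phi x = of_real (tent (axis i 1) r x) * cnj (bra_kernel \<theta> 0 x)" for x
  have "test_ket phi"
    unfolding phi_def
    by (intro test_ket_weighted continuous_on_tent bounded_tent_support continuous_intros)
  then have "test_ket (passive_action (transpose R) phi)"
    using orth by (simp add: test_ket_passive_action)
  then have eq: "homodyne_bra \<theta> 0 phi = of_real c * homodyne_bra \<theta>' 0 (passive_action (transpose R) phi)"
    using rel[unfolded bra_intertwined_def, rule_format, of "passive_action (transpose R) phi"]
    by (simp only: passive_action_transpose_cancel[OF orth])
  have "homodyne_bra \<theta> 0 phi \<noteq> 0"
    unfolding phi_def
  proof (rule homodyne_bra_weighted_conj_kernel_nonzero[OF adm])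
    show "0 < tent (axis i 1) r (axis i 1)"
      using \<open>R $ i $ j \<noteq> 0\<close> by (simp add: r_def tent_center_pos)
    show "\<forall>k. \<theta> $ k = 0 \<longrightarrow> axis i 1 $ k = 0 $ k"
      using \<open>\<theta> $ i \<noteq> 0\<close> by (auto simp: axis_def)
  qed (simp_all add: continuous_on_tent bounded_tent_support tent_nonneg)
  moreover have "homodyne_bra \<theta>' 0 (passive_action (transpose R) phi) = 0"
  proof (rule homodyne_bra_eq_0)
    fix z :: "real^'n" assume "\<forall>k. \<theta>' $ k = 0 \<longrightarrow> z $ k = 0 $ k"
    then have "z $ j = 0" using \<open>\<theta>' $ j = 0\<close> by simp
    have "transpose R *v (R *v z - axis i 1) = z - transpose R *v axis i 1"
      by (simp only: matrix_vector_mult_diff_distrib orthogonal_matrix_transpose_cancel[OF orth])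
    then have "norm (R *v z - axis i 1) = norm (z - transpose R *v axis i 1)"
      using norm_orthogonal_matrix_vector[OF orthogonal_matrix_transpose[THEN iffD2, OF orth],
          of "R *v z - axis i 1"]
      by metis
    moreover have "(z - transpose R *v axis i 1) $ j = - R $ i $ j"
      using \<open>z $ j = 0\<close> by (simp add: matrix_vector_mult_basis column_def transpose_def)
    ultimately have "r \<le> norm (R *v z - axis i 1)"
      using component_le_norm_cart[of "z - transpose R *v axis i 1" j] by (simp add: r_def)
    then show "passive_action (transpose R) phi z = 0"
      by (simp add: passive_action_def phi_def tent_eq_0)
  qed
  ultimately show False using eq by simp
qed

lemma bra_intertwined_zero_pattern:
  fixes R :: "real^'n^'n"
  assumes rel: "bra_intertwined \<theta> \<theta>' R c" and orth: "orthogonal_matrix R" and "c \<noteq> 0"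
    and "admissible_angles \<theta>" "admissible_angles \<theta>'" and "R $ i $ j \<noteq> 0"
  shows "\<theta> $ i = 0 \<longleftrightarrow> \<theta>' $ j = 0"
proof -
  have "transpose R $ j $ i \<noteq> 0" using \<open>R $ i $ j \<noteq> 0\<close> by (simp add: transpose_def)
  then show ?thesis
    using bra_intertwined_entry_eq_0[OF rel orth \<open>admissible_angles \<theta>\<close>, of i j]
      bra_intertwined_entry_eq_0[OF bra_intertwined_transpose[OF rel orth \<open>c \<noteq> 0\<close>]
        orthogonal_matrix_transpose[THEN iffD2, OF orth] \<open>admissible_angles \<theta>'\<close>, of j i]
      \<open>R $ i $ j \<noteq> 0\<close>
    by blast
qed

lemma bra_intertwined_phase_nonneg:
  fixes R :: "real^'n^'n"
  assumes rel: "bra_intertwined \<theta> \<theta>' R c" and orth: "orthogonal_matrix R"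
    and full: "\<forall>j. \<theta>' $ j \<noteq> 0"
  shows "Im (of_real c * bra_kernel \<theta>' 0 x * cnj (bra_kernel \<theta> 0 (R *v x))) = 0 \<and>
    0 \<le> Re (of_real c * bra_kernel \<theta>' 0 x * cnj (bra_kernel \<theta> 0 (R *v x)))"
proof -
  define w where "w x = of_real c * bra_kernel \<theta>' 0 x * cnj (bra_kernel \<theta> 0 (R *v x))" for x
  have "Im (w x) = 0 \<and> 0 \<le> Re (w x)"
  proof (rule nonneg_real_if_nonneg_on_tests)
    show "continuous_on UNIV w"
      unfolding w_def by (intro continuous_intros)
    fix b :: "real^'n \<Rightarrow> real"
    assume b: "continuous_on UNIV b" "bounded {x. b x \<noteq> 0}" "\<forall>x. 0 \<le> b x"
    define psi where "psi z = of_real (b z) * cnj (bra_kernel \<theta> 0 (R *v z))" for z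
    have "test_ket psi"
      unfolding psi_def by (intro test_ket_weighted b(1,2) continuous_intros)
    then have eq: "homodyne_bra \<theta> 0 (passive_action R psi) = of_real c * homodyne_bra \<theta>' 0 psi"
      using rel by (simp add: bra_intertwined_def)
    have "passive_action R psi = (\<lambda>x. of_real (b (transpose R *v x)) * cnj (bra_kernel \<theta> 0 x))"
      by (simp only: psi_def passive_action_def orthogonal_matrix_transpose_cancel[OF orth])
    then obtain t where "0 \<le> t" "homodyne_bra \<theta> 0 (passive_action R psi) = of_real t"
      using homodyne_bra_weighted_conj_kernel_nonneg[of "\<lambda>x. b (transpose R *v x)" \<theta> 0] b(3) by auto
    moreover have "rotated \<theta>' = UNIV" using full by auto
    then have "of_real c * homodyne_bra \<theta>' 0 psi =
        integral\<^sup>L (lborel_coords UNIV) (\<lambda>y. of_real (b (slice UNIV 0 y)) * w (slice UNIV 0 y))"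
      unfolding homodyne_bra_slice integral_mult_right_zero[symmetric]
      by (intro Bochner_Integration.integral_cong) (simp_all add: psi_def w_def ac_simps)
    ultimately show "\<exists>t\<ge>0. integral\<^sup>L (lborel_coords UNIV)
        (\<lambda>y. of_real (b (slice UNIV 0 y)) * w (slice UNIV 0 y)) = of_real t"
      using eq by metis
  qed
  then show ?thesis by (simp add: w_def)
qed

section \<open>Quadratic phases and block structure\<close>

lemma cis_scaled_eq_1_imp_0:
  assumes "\<And>t::real. cis (t\<^sup>2 * q) = 1"
  shows "q = 0"
proof (rule ccontr)
  assume "q \<noteq> 0"
  define t where "t = sqrt (pi / \<bar>q\<bar>)"
  have "t\<^sup>2 * \<bar>q\<bar> = pi" using \<open>q \<noteq> 0\<close> by (simp add: t_def)
  then have "t\<^sup>2 * q = pi \<or> t\<^sup>2 * q = - pi" by (cases "q < 0") auto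
  moreover have "cis (- pi) = -1" by (simp add: complex_eq_iff)
  ultimately have "cis (t\<^sup>2 * q) = -1" by auto
  with assms[of t] show False by simp
qed

text \<open>Being real, nonnegative and of constant modulus, the phase factor is the constant \<open>|\<kappa>|\<close>;
  rescaling \<open>x\<close> then sweeps \<open>q(x)\<close> over a half line.\<close>

lemma quadratic_phase_eq_0:
  fixes q :: "'a::real_vector \<Rightarrow> real"
  assumes hom: "\<And>t x. q (t *\<^sub>R x) = t\<^sup>2 * q x" and "\<kappa> \<noteq> 0"
    and nonneg: "\<And>x. Im (\<kappa> * cis (q x)) = 0 \<and> 0 \<le> Re (\<kappa> * cis (q x))"
  shows "q x = 0"
proof -
  have const: "\<kappa> * cis (q y) = of_real (cmod \<kappa>)" for y
  proof -
    have "\<kappa> * cis (q y) = of_real (cmod (\<kappa> * cis (q y)))"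
      using nonneg[of y] by (simp add: complex_eq_iff cmod_eq_Re)
    then show ?thesis by (simp add: norm_mult)
  qed
  have "q 0 = 0" using hom[of 0 0] by simp
  then have "cis (q y) = 1" for y
    using const[of y] const[of 0] \<open>\<kappa> \<noteq> 0\<close> by simp
  then have "cis (t\<^sup>2 * q x) = 1" for t
    using hom[of t x] by metis
  then show ?thesis by (rule cis_scaled_eq_1_imp_0)
qed

lemma orthogonal_congruence_diagonal:
  fixes R :: "real^'n^'n" and d d' :: "'n \<Rightarrow> real"
  assumes orth: "orthogonal_matrix R"
    and eq: "\<And>x. (\<Sum>i\<in>UNIV. d i * ((R *v x) $ i)\<^sup>2) = (\<Sum>j\<in>UNIV. d' j * (x $ j)\<^sup>2)"
  shows "d k * R $ k $ j = d' j * R $ k $ j"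
proof -
  have bilinear: "(\<Sum>i\<in>UNIV. d i * (R *v x) $ i * (R *v y) $ i) = (\<Sum>l\<in>UNIV. d' l * x $ l * y $ l)"
    for x y
  proof -
    have "(\<Sum>i\<in>UNIV. d i * ((R *v (x + y)) $ i)\<^sup>2) = (\<Sum>i\<in>UNIV. d i * ((R *v x) $ i)\<^sup>2)
        + (\<Sum>i\<in>UNIV. d i * ((R *v y) $ i)\<^sup>2) + 2 * (\<Sum>i\<in>UNIV. d i * (R *v x) $ i * (R *v y) $ i)"
      by (simp add: matrix_vector_right_distrib power2_eq_square sum.distrib[symmetric]
          sum_distrib_left algebra_simps)
    moreover have "(\<Sum>l\<in>UNIV. d' l * ((x + y) $ l)\<^sup>2) = (\<Sum>l\<in>UNIV. d' l * (x $ l)\<^sup>2)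
        + (\<Sum>l\<in>UNIV. d' l * (y $ l)\<^sup>2) + 2 * (\<Sum>l\<in>UNIV. d' l * x $ l * y $ l)"
      by (simp add: power2_eq_square sum.distrib[symmetric] sum_distrib_left algebra_simps)
    ultimately show ?thesis using eq[of x] eq[of y] eq[of "x + y"] by linarith
  qed
  have "(\<Sum>i\<in>UNIV. d i * (R *v (transpose R *v axis k 1)) $ i * (R *v axis j 1) $ i)
      = d k * R $ k $ j"
    unfolding orthogonal_matrix_transpose_cancel(1)[OF orth] unfolding matrix_vector_mult_basis
    by (simp add: column_def axis_def if_distrib[of "\<lambda>z. _ * z * _"] cong: if_cong)
  moreover have "(\<Sum>l\<in>UNIV. d' l * (transpose R *v axis k 1) $ l * axis j 1 $ l) = d' j * R $ k $ j"
    unfolding matrix_vector_mult_basis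
    by (simp add: column_def transpose_def axis_def if_distrib[of "\<lambda>z. _ * z"] cong: if_cong)
  ultimately show ?thesis using bilinear[of "transpose R *v axis k 1" "axis j 1"] by simp
qed

lemma bra_intertwined_cot_eq:
  fixes R :: "real^'n^'n"
  assumes rel: "bra_intertwined \<theta> \<theta>' R c" and orth: "orthogonal_matrix R" and "c \<noteq> 0"
    and adm: "admissible_angles \<theta>" "admissible_angles \<theta>'"
    and full: "\<forall>j. \<theta> $ j \<noteq> 0" "\<forall>j. \<theta>' $ j \<noteq> 0"
    and "R $ k $ j \<noteq> 0"
  shows "cot (\<theta> $ k) = cot (\<theta>' $ j)"
proof -
  define Q where "Q x = (\<Sum>i\<in>UNIV. cot (\<theta> $ i) * ((R *v x) $ i)\<^sup>2)
      - (\<Sum>l\<in>UNIV. cot (\<theta>' $ l) * (x $ l)\<^sup>2)" for x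
  define \<kappa> where "\<kappa> = of_real c * bra_kernel \<theta>' 0 0 * cnj (bra_kernel \<theta> 0 0)"
  have "rotated \<theta> = UNIV" "rotated \<theta>' = UNIV" using full by auto
  have phase: "of_real c * bra_kernel \<theta>' 0 x * cnj (bra_kernel \<theta> 0 (R *v x)) = \<kappa> * cis (Q x / 2)"
    for x
  proof -
    have "of_real c * bra_kernel \<theta>' 0 x * cnj (bra_kernel \<theta> 0 (R *v x))
        = \<kappa> * (cis (- (\<Sum>l\<in>UNIV. cot (\<theta>' $ l) * (x $ l)\<^sup>2) / 2)
            * cis ((\<Sum>i\<in>UNIV. cot (\<theta> $ i) * ((R *v x) $ i)\<^sup>2) / 2))"
      using \<open>rotated \<theta> = UNIV\<close> \<open>rotated \<theta>' = UNIV\<close>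
      by (subst (1 2) bra_kernel_origin) (simp add: \<kappa>_def cis_cnj ac_simps)
    also have "\<dots> = \<kappa> * cis (Q x / 2)"
      unfolding cis_mult by (rule arg_cong[where f = "\<lambda>t. \<kappa> * cis t"]) (simp add: Q_def field_simps)
    finally show ?thesis .
  qed
  have "\<kappa> \<noteq> 0"
    using \<open>c \<noteq> 0\<close> bra_kernel_nonzero[OF adm(1)] bra_kernel_nonzero[OF adm(2)] by (simp add: \<kappa>_def)
  have hom: "Q (t *\<^sub>R x) / 2 = t\<^sup>2 * (Q x / 2)" for t x
    unfolding Q_def matrix_vector_mult_scaleR
    by (simp add: power_mult_distrib sum_distrib_left right_diff_distrib mult.left_commute)
  have nonneg: "Im (\<kappa> * cis (Q x / 2)) = 0 \<and> 0 \<le> Re (\<kappa> * cis (Q x / 2))" for x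
    unfolding phase[symmetric] by (rule bra_intertwined_phase_nonneg[OF rel orth full(2)])
  have "Q x / 2 = 0" for x
    by (rule quadratic_phase_eq_0[where q = "\<lambda>x. Q x / 2", OF hom \<open>\<kappa> \<noteq> 0\<close> nonneg])
  then have "cot (\<theta> $ k) * R $ k $ j = cot (\<theta>' $ j) * R $ k $ j"
    by (intro orthogonal_congruence_diagonal[OF orth]) (simp add: Q_def)
  then show ?thesis using \<open>R $ k $ j \<noteq> 0\<close> by simp
qed

lemma orthogonal_matrix_row_nonzero:
  assumes "orthogonal_matrix (R :: real^'n^'n)"
  obtains j where "R $ i $ j \<noteq> 0"
proof -
  have "norm (row i R) = 1"
    using assms by (simp add: orthogonal_matrix_orthonormal_rows)
  then have "row i R \<noteq> 0" by auto
  then show ?thesis using that by (auto simp: row_def vec_eq_iff)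
qed

lemma orthogonal_matrix_column_nonzero:
  assumes "orthogonal_matrix (R :: real^'n^'n)"
  obtains i where "R $ i $ j \<noteq> 0"
proof -
  have "norm (column j R) = 1"
    using assms by (simp add: orthogonal_matrix_orthonormal_columns)
  then have "column j R \<noteq> 0" by auto
  then show ?thesis using that by (auto simp: column_def vec_eq_iff)
qed

lemma block_decomposable_if_labels_agree:
  fixes R :: "real^'n^'n" and f g :: "'n \<Rightarrow> 'a"
  assumes orth: "orthogonal_matrix R"
    and agree: "\<And>i j. R $ i $ j \<noteq> 0 \<Longrightarrow> f i = g j"
    and "f i1 \<noteq> f i0"
  shows "block_decomposable R"
  unfolding block_decomposable_def
proof (rule exI[of _ "{j. g j = f i0}"], rule exI[of _ "{i. f i = f i0}"], intro conjI allI impI)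
  obtain j0 where "R $ i0 $ j0 \<noteq> 0" using orthogonal_matrix_row_nonzero[OF orth] .
  obtain j1 where "R $ i1 $ j1 \<noteq> 0" using orthogonal_matrix_row_nonzero[OF orth] .
  show "{j. g j = f i0} \<noteq> {}" and "{j. g j = f i0} \<noteq> UNIV"
    using agree[OF \<open>R $ i0 $ j0 \<noteq> 0\<close>] agree[OF \<open>R $ i1 $ j1 \<noteq> 0\<close>] \<open>f i1 \<noteq> f i0\<close> by auto
  show "{i. f i = f i0} \<noteq> {}" and "{i. f i = f i0} \<noteq> UNIV"
    using \<open>f i1 \<noteq> f i0\<close> by auto
  fix i j assume "(i \<in> {i. f i = f i0}) \<noteq> (j \<in> {j. g j = f i0})"
  then show "R $ i $ j = 0" using agree by (metis mem_Collect_eq)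
qed

lemma inj_on_cot: "inj_on cot ({-(pi/2)<..pi/2} - {0})"
proof (rule inj_onI)
  fix a b assume a: "a \<in> {-(pi/2)<..pi/2} - {0}" and b: "b \<in> {-(pi/2)<..pi/2} - {0}"
    and "cot a = cot b"
  have "sin a \<noteq> 0" "sin b \<noteq> 0"
    using a b admissible_angles_if_in_range[of "vec a"] admissible_angles_if_in_range[of "vec b"]
    by (auto simp: admissible_angles_def)
  then have "sin (b - a) = 0"
    using \<open>cot a = cot b\<close> by (simp add: cot_def sin_diff field_simps mult.commute)
  moreover have "\<bar>b - a\<bar> < pi" using a b by auto
  ultimately show "a = b" using sin_zero_pi_iff by force
qed

lemma det_matrix_inv_nonzero:
  assumes "invertible (L :: real^'n^'n)"
  shows "det (matrix_inv L) \<noteq> 0"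
proof -
  have "L ** matrix_inv L = mat 1"
    using assms unfolding invertible_def matrix_inv_def by (rule someI2_ex) auto
  then have "det L * det (matrix_inv L) = 1" by (metis det_mul det_I)
  then show ?thesis by auto
qed

lemma bra_intertwined_block_decomposable:
  fixes \<theta> \<theta>' :: "real^'n" and R :: "real^'n^'n"
  assumes rel: "bra_intertwined \<theta> \<theta>' R c" and orth: "orthogonal_matrix R" and "c \<noteq> 0"
    and angles: "\<forall>j. \<theta> $ j \<in> {-(pi/2)<..pi/2}" and angles': "\<forall>j. \<theta>' $ j \<in> {-(pi/2)<..pi/2}"
    and not_equal: "\<not> (\<exists>a. \<forall>j. \<theta> $ j = a)"
  shows "block_decomposable R"
proof -
  note adm = admissible_angles_if_in_range[OF angles] admissible_angles_if_in_range[OF angles']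
  note zero_pattern = bra_intertwined_zero_pattern[OF rel orth \<open>c \<noteq> 0\<close> adm]
  show ?thesis
  proof (cases "\<exists>i. \<theta> $ i = 0")
    case True
    then obtain i0 i1 where "\<theta> $ i0 = 0" "\<theta> $ i1 \<noteq> 0" using not_equal by metis
    then show ?thesis
      using zero_pattern
      by (intro block_decomposable_if_labels_agree[OF orth, of "\<lambda>i. \<theta> $ i = 0" "\<lambda>j. \<theta>' $ j = 0" i1 i0])
        auto
  next
    case False
    then have full': "\<forall>j. \<theta>' $ j \<noteq> 0"
      using zero_pattern orthogonal_matrix_column_nonzero[OF orth] by metis
    obtain i0 i1 where "\<theta> $ i1 \<noteq> \<theta> $ i0" using not_equal by metis
    then have "cot (\<theta> $ i1) \<noteq> cot (\<theta> $ i0)"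
      using inj_on_cot angles False by (auto simp: inj_on_def)
    then show ?thesis
      using bra_intertwined_cot_eq[OF rel orth \<open>c \<noteq> 0\<close> adm _ full'] False
      by (intro block_decomposable_if_labels_agree[OF orth, of "\<lambda>i. cot (\<theta> $ i)" "\<lambda>j. cot (\<theta>' $ j)" i1 i0])
        auto
  qed
qed

theorem theorem3:
  fixes \<theta> :: "real^'n" and R :: "real^'n^'n"
  assumes angles: "\<forall>j. \<theta> $ j \<in> {-(pi/2)<..pi/2}"
    and orth: "orthogonal_matrix R"
    and nondec: "\<not> block_decomposable R"
    and not_equal: "\<not> (\<exists>c. \<forall>j. \<theta> $ j = c)"
  shows "\<not> (\<exists>\<theta>' L. (\<forall>j. \<theta>' $ j \<in> {-(pi/2)<..pi/2}) \<and> invertible L \<and>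
            (\<forall>m psi. test_ket psi \<longrightarrow>
               homodyne_bra \<theta> m (passive_action R psi) =
               complex_of_real (sqrt \<bar>det (matrix_inv L)\<bar>)
                 * homodyne_bra \<theta>' (matrix_inv L *v m) psi))"
proof (intro notI, elim exE conjE)
  fix \<theta>' :: "real^'n" and L :: "real^'n^'n"
  assume angles': "\<forall>j. \<theta>' $ j \<in> {-(pi/2)<..pi/2}" and "invertible L"
    and bra: "\<forall>m psi. test_ket psi \<longrightarrow>
      homodyne_bra \<theta> m (passive_action R psi) =
      complex_of_real (sqrt \<bar>det (matrix_inv L)\<bar>) * homodyne_bra \<theta>' (matrix_inv L *v m) psi"
  define c where "c = sqrt \<bar>det (matrix_inv L)\<bar>"
  have "c \<noteq> 0"
    using det_matrix_inv_nonzero[OF \<open>invertible L\<close>] by (simp add: c_def)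
  have "bra_intertwined \<theta> \<theta>' R c"
    using bra unfolding bra_intertwined_def c_def by (metis matrix_vector_mult_0_right)
  then have "block_decomposable R"
    using bra_intertwined_block_decomposable orth \<open>c \<noteq> 0\<close> angles angles' not_equal by blast
  with nondec show False ..
qed

end
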